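(* Let \((G,\hat{k})\) be an instance with \(\mathrm{surplus}(G)\ge 2\) given to one of Branching Rules 1 or 2 (which applies to it), and let \((G_i,\hat{k}_i)\) be any instance output by the rule. Then \(\hat{k}_i\leq\hat{k}-1\).
   Context: All graphs are finite, undirected and simple. \(MM(G)\) is the size of a maximum matching; \(LP(G)\) is the optimum value of the LP: minimize \(\sum_v x_v\) subject to \(x_u+x_v\ge1\) for each edge \(\{u,v\}\) and \(0\le x_v\le1\). \(\mathrm{surplus}(G)\) is the minimum of \(|N(Z)|-|Z|\) over nonempty independent sets \(Z\), where \(N(Z)\) is the set of vertices outside \(Z\) adjacent to \(Z\). For an instance \((G,\hat{k})\), let \(k=(2LP(G)-MM(G))+\hat{k}\), so \(\hat{k}=k+MM(G)-2LP(G)\). The Gallai–Edmonds decomposition of a graph \(H\) is \(V(H)=O\uplus I\uplus P\) where \(O\) is the set of vertices left unsaturated by some maximum matching of \(H\), \(I=N(O)\), \(P=V(H)\setminus(O\cup I)\). \(G\setminus X\) denotes \(G[V(G)\setminus X]\). With \(O\uplus I\uplus P\) the Gallai–Edmonds decomposition of \(G\): Branching Rule 1 applies iff \(G[I\cup P]\) has an edge \(\{u,v\}\); it outputs \((G_1,\hat{k}_1),(G_2,\hat{k}_2)\) with \(G_1=G\setminus\{u\}\), \(G_2=G\setminus\{v\}\), \(k_i=k-1\), \(\hat{k}_i=k_i+MM(G_i)-2LP(G_i)\). Branching Rule 2 applies iff Rule 1 does not: pick \(u\in O\) with two neighbours \(v,w\in O\); let \(G'=G\setminus\{u\}\) with Gallai–Edmonds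 decomposition \(O'\uplus I'\uplus P'\), and pick an edge \(\{x,y\}\) of \(G'[P']\); output \((G_1,\hat{k}_1),(G_2,\hat{k}_2),(G_3,\hat{k}_3)\) with \(G_1=G\setminus\{v,w\}\), \(G_2=G'\setminus\{x\}\), \(G_3=G'\setminus\{y\}\), \(k_i=k-2\), \(\hat{k}_i=k_i+MM(G_i)-2LP(G_i)\). *)

theory Defs
  imports Complex_Main
begin

type_synonym 'a graph = "'a set \<times> 'a set set"

definition verts :: "'a graph \<Rightarrow> 'a set" where "verts G = fst G"
definition edges :: "'a graph \<Rightarrow> 'a set set" where "edges G = snd G"

definition simple_graph :: "'a graph \<Rightarrow> bool" where
  "simple_graph G \<longleftrightarrow> finite (verts G) \<and>
     (\<forall>e\<in>edges G. \<exists>u v. u \<noteq> v \<and> u \<in> verts G \<and> v \<in> verts G \<and> e = {u, v})"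

definition del :: "'a graph \<Rightarrow> 'a set \<Rightarrow> 'a graph" where
  "del G X = (verts G - X, {e \<in> edges G. e \<inter> X = {}})"

definition nbhd :: "'a graph \<Rightarrow> 'a set \<Rightarrow> 'a set" where
  "nbhd G Z = {v \<in> verts G - Z. \<exists>z\<in>Z. {z, v} \<in> edges G}"

definition indep :: "'a graph \<Rightarrow> 'a set \<Rightarrow> bool" where
  "indep G Z \<longleftrightarrow> Z \<subseteq> verts G \<and> (\<forall>u\<in>Z. \<forall>v\<in>Z. {u, v} \<notin> edges G)"

definition surplus :: "'a graph \<Rightarrow> int" where
  "surplus G = Min {int (card (nbhd G Z)) - int (card Z) | Z. Z \<noteq> {} \<and> indep G Z}"

definition matching :: "'a graph \<Rightarrow> 'a set set \<Rightarrow> bool" where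
  "matching G M \<longleftrightarrow> M \<subseteq> edges G \<and> (\<forall>e1\<in>M. \<forall>e2\<in>M. e1 \<noteq> e2 \<longrightarrow> e1 \<inter> e2 = {})"

definition MM :: "'a graph \<Rightarrow> nat" where
  "MM G = Max {card M | M. matching G M}"

definition max_matching :: "'a graph \<Rightarrow> 'a set set \<Rightarrow> bool" where
  "max_matching G M \<longleftrightarrow> matching G M \<and> card M = MM G"

definition LP :: "'a graph \<Rightarrow> real" where
  "LP G = Inf {(\<Sum>v\<in>verts G. x v) | x :: 'a \<Rightarrow> real.
     (\<forall>v\<in>verts G. 0 \<le> x v \<and> x v \<le> 1) \<and> (\<forall>u v. {u, v} \<in> edges G \<longrightarrow> x u + x v \<ge> 1)}"

definition GE_O :: "'a graph \<Rightarrow> 'a set" where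
  "GE_O G = {v \<in> verts G. \<exists>M. max_matching G M \<and> (\<forall>e\<in>M. v \<notin> e)}"

definition GE_I :: "'a graph \<Rightarrow> 'a set" where
  "GE_I G = nbhd G (GE_O G)"

definition GE_P :: "'a graph \<Rightarrow> 'a set" where
  "GE_P G = verts G - (GE_O G \<union> GE_I G)"

definition khat :: "'a graph \<Rightarrow> int \<Rightarrow> real" where
  "khat G k = real_of_int k + real (MM G) - 2 * LP G"

inductive branch_output :: "'a graph \<Rightarrow> int \<Rightarrow> 'a graph \<Rightarrow> int \<Rightarrow> bool" where
  rule1: "\<lbrakk> {u, v} \<in> edges G; u \<in> GE_I G \<union> GE_P G; v \<in> GE_I G \<union> GE_P G;
            Gi \<in> {del G {u}, del G {v}} \<rbrakk>
          \<Longrightarrow> branch_output G k Gi (k - 1)"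
| rule2: "\<lbrakk> \<not> (\<exists>a b. {a, b} \<in> edges G \<and> a \<in> GE_I G \<union> GE_P G \<and> b \<in> GE_I G \<union> GE_P G);
            u \<in> GE_O G; v \<in> GE_O G; w \<in> GE_O G; v \<noteq> w;
            {u, v} \<in> edges G; {u, w} \<in> edges G;
            G' = del G {u};
            {x, y} \<in> edges G'; x \<in> GE_P G'; y \<in> GE_P G';
            Gi \<in> {del G {v, w}, del G' {x}, del G' {y}} \<rbrakk>
          \<Longrightarrow> branch_output G k Gi (k - 2)"

end

theory Submission
  imports Defs
begin

text \<open>
  Each instance output by either rule is \<open>G - X\<close> for a set \<open>X\<close> of \<open>|X| = k - k\<^sub>i \<le> 2\<close>
  vertices whose deletion lowers the matching number. Since \<open>surplus(G) \<ge> 2 \<ge> |X|\<close>, the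
  graph \<open>G - X\<close> still satisfies Hall's condition \<open>|N(Z)| \<ge> |Z|\<close> for its independent sets,
  which makes the all-\<open>1/2\<close> vector an optimal LP solution: \<open>2 LP(G - X) = n - |X|\<close>, whereas
  \<open>2 LP(G) \<le> n\<close> always. So \<open>k\<^sub>i - 2 LP(G\<^sub>i) \<le> k - 2 LP(G)\<close>, and the drop of \<open>MM\<close> gives
  the claim.

  Deleting a vertex outside \<open>O\<close> lowers \<open>MM\<close> by the definition of \<open>O\<close>. For two neighbours
  \<open>v, w\<close> of some \<open>u \<in> O\<close>, exchanging a maximum matching avoiding \<open>v, w\<close> against a maximum
  matching missing \<open>u\<close> along the alternating path from \<open>u\<close> gives a maximum matching missing
  \<open>u\<close> and one of \<open>v, w\<close>, which could be augmented by \<open>uv\<close> or \<open>uw\<close>.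
\<close>

section \<open>Graphs and vertex deletion\<close>

lemma finite_edges: "simple_graph G \<Longrightarrow> finite (edges G)"
proof -
  assume G: "simple_graph G"
  have "edges G \<subseteq> Pow (verts G)"
    using G unfolding simple_graph_def by force
  moreover have "finite (verts G)"
    using G unfolding simple_graph_def by blast
  ultimately show ?thesis
    by (simp add: finite_subset)
qed

lemma edge_other_end:
  assumes "simple_graph G" "e \<in> edges G" "x \<in> e"
  shows "\<exists>y. e = {x, y}"
proof -
  obtain a b where "e = {a, b}"
    using assms(1,2) unfolding simple_graph_def by blast
  then show ?thesis
    using assms(3) by (auto simp: insert_commute)
qed

lemma verts_del [simp]: "verts (del G X) = verts G - X"
  unfolding del_def verts_def by simp

lemma edges_del [simp]: "edges (del G X) = {e \<in> edges G. e \<inter> X = {}}"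
  unfolding del_def edges_def by simp

lemma simple_graph_del: "simple_graph G \<Longrightarrow> simple_graph (del G X)"
  unfolding simple_graph_def by fastforce

lemma del_del: "del (del G X) Y = del G (X \<union> Y)"
  unfolding del_def verts_def edges_def by auto

section \<open>Matchings\<close>

lemma finite_matching: "simple_graph G \<Longrightarrow> matching G M \<Longrightarrow> finite M"
  unfolding matching_def using finite_edges finite_subset by blast

lemma matching_subset: "matching G M \<Longrightarrow> M' \<subseteq> M \<Longrightarrow> matching G M'"
  unfolding matching_def by blast

lemma matching_del: "matching (del G X) M \<Longrightarrow> matching G M"
  unfolding matching_def by auto

lemma matching_del_avoids: "matching (del G X) M \<Longrightarrow> \<Union>M \<inter> X = {}"
  unfolding matching_def by auto

lemma matching_edge_other_end:
  assumes "simple_graph G" "matching G M" "e \<in> M" "x \<in> e"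
  shows "\<exists>y. e = {x, y}"
proof -
  have "e \<in> edges G"
    using assms(2,3) unfolding matching_def by blast
  then show ?thesis
    using edge_other_end[OF assms(1) _ assms(4)] by blast
qed

lemma matching_insert:
  assumes G: "simple_graph G" and M: "matching G M" and e: "e \<in> edges G" "e \<inter> \<Union>M = {}"
  shows "matching G (insert e M)" "card (insert e M) = Suc (card M)"
proof -
  show "matching G (insert e M)"
    using M e unfolding matching_def by blast
  have "e \<noteq> {}"
    using G e(1) unfolding simple_graph_def by blast
  then have "e \<notin> M"
    using e(2) by blast
  then show "card (insert e M) = Suc (card M)"
    using finite_matching[OF G M] by simp
qed

lemma matching_remove:
  assumes G: "simple_graph G" and M: "matching G M" and e: "e \<in> M"
  shows "matching G (M - {e})" "card M = Suc (card (M - {e}))" "e \<inter> \<Union>(M - {e}) = {}"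
proof -
  show "matching G (M - {e})"
    using M by (rule matching_subset) blast
  show "card M = Suc (card (M - {e}))"
    using card_Suc_Diff1[OF finite_matching[OF G M] e] by simp
  show "e \<inter> \<Union>(M - {e}) = {}"
    using M e unfolding matching_def by blast
qed

lemma finite_matching_cards: "simple_graph G \<Longrightarrow> finite {card M | M. matching G M}"
proof -
  assume G: "simple_graph G"
  have "{card M | M. matching G M} \<subseteq> {..card (edges G)}"
    using card_mono[OF finite_edges[OF G]] unfolding matching_def by auto
  then show ?thesis
    using finite_subset by blast
qed

lemma card_le_MM: "simple_graph G \<Longrightarrow> matching G M \<Longrightarrow> card M \<le> MM G"
  unfolding MM_def by (rule Max_ge[OF finite_matching_cards]) blast+

lemma ex_max_matching: "simple_graph G \<Longrightarrow> \<exists>M. max_matching G M"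
proof -
  assume G: "simple_graph G"
  have "matching G {}"
    unfolding matching_def by simp
  then have "{card M | M. matching G M} \<noteq> {}"
    by blast
  from Max_in[OF finite_matching_cards[OF G] this] show ?thesis
    unfolding max_matching_def MM_def by auto
qed

lemma card_lt_MM_if_augmentable:
  assumes G: "simple_graph G" and M: "matching G M"
    and ab: "{a, b} \<in> edges G" "a \<notin> \<Union>M" "b \<notin> \<Union>M"
  shows "card M < MM G"
proof -
  have "{a, b} \<inter> \<Union>M = {}"
    using ab by blast
  from matching_insert[OF G M ab(1) this] show ?thesis
    using card_le_MM[OF G] by (metis Suc_le_lessD)
qed

text \<open>
  \<open>M'\<close> and \<open>N'\<close> arise from \<open>M\<close> and \<open>N\<close> by trading the edges of an alternating path that
  starts at \<open>u\<close> and ends at \<open>a\<close>.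
\<close>

definition matching_exchange ::
  "'a graph \<Rightarrow> 'a set set \<Rightarrow> 'a set set \<Rightarrow> 'a \<Rightarrow> 'a set set \<Rightarrow> 'a set set \<Rightarrow> 'a \<Rightarrow> bool" where
  "matching_exchange G M N u M' N' a \<longleftrightarrow> matching G M' \<and> matching G N' \<and> M' \<union> N' \<subseteq> M \<union> N \<and>
     card M' + card N' = card M + card N \<and> u \<notin> \<Union>M' \<and> \<Union>M' \<subseteq> insert a (\<Union>M)"

lemma matching_exchange_refl:
  "matching G M \<Longrightarrow> matching G N \<Longrightarrow> u \<notin> \<Union>M \<Longrightarrow> matching_exchange G M N u M N u"
  unfolding matching_exchange_def by blast

lemma matching_exchange_single_edge:
  assumes G: "simple_graph G" and M: "matching G M" and N: "matching G N"
    and e: "{u, z} \<in> M" and uz: "u \<notin> \<Union>N" "z \<notin> \<Union>N"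
  shows "matching_exchange G M N u (M - {{u, z}}) (insert {u, z} N) u"
proof -
  note R = matching_remove[OF G M e]
  have "{u, z} \<in> edges G"
    using M e unfolding matching_def by blast
  moreover have "{u, z} \<inter> \<Union>N = {}"
    using uz by blast
  ultimately have "matching G (insert {u, z} N)" "card (insert {u, z} N) = Suc (card N)"
    using matching_insert[OF G N] by blast+
  moreover have "u \<notin> \<Union>(M - {{u, z}})"
    using R(3) by blast
  moreover have "M - {{u, z}} \<union> insert {u, z} N \<subseteq> M \<union> N"
    using e by blast
  ultimately show ?thesis
    using R(1,2) unfolding matching_exchange_def by auto
qed

lemma matching_exchange_extend:
  assumes G: "simple_graph G" and M: "matching G M" and N: "matching G N"
    and e: "{u, z} \<in> M" and f: "{z, y} \<in> N" and u: "u \<notin> \<Union>N"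
    and ex: "matching_exchange G (M - {{u, z}}) (N - {{z, y}}) y M' N' a" and a: "y \<in> \<Union>M \<or> a = y"
  shows "matching_exchange G M N u (insert {z, y} M') (insert {u, z} N') a"
proof -
  note RM = matching_remove[OF G M e] and RN = matching_remove[OF G N f]
  have M': "matching G M'" "matching G N'" "M' \<union> N' \<subseteq> (M - {{u, z}}) \<union> (N - {{z, y}})"
    "card M' + card N' = card (M - {{u, z}}) + card (N - {{z, y}})"
    "y \<notin> \<Union>M'" "\<Union>M' \<subseteq> insert a (\<Union>(M - {{u, z}}))"
    using ex unfolding matching_exchange_def by blast+
  have "u \<notin> \<Union>(M - {{u, z}})" "z \<notin> \<Union>(M - {{u, z}})"
    using RM(3) by blast+
  moreover have "u \<notin> \<Union>(N - {{z, y}})" "z \<notin> \<Union>(N - {{z, y}})"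
    using RN(3) u by blast+
  moreover have "\<Union>M' \<union> \<Union>N' \<subseteq> \<Union>(M - {{u, z}}) \<union> \<Union>(N - {{z, y}})"
    using M'(3) by blast
  ultimately have uz: "u \<notin> \<Union>M'" "z \<notin> \<Union>M'" "u \<notin> \<Union>N'" "z \<notin> \<Union>N'"
    by blast+
  then have disj: "{z, y} \<inter> \<Union>M' = {}" "{u, z} \<inter> \<Union>N' = {}"
    using M'(5) by simp_all
  have "{u, z} \<in> edges G" "{z, y} \<in> edges G"
    using M N e f unfolding matching_def by blast+
  note insM = matching_insert[OF G M'(1) \<open>{z, y} \<in> edges G\<close> disj(1)]
    and insN = matching_insert[OF G M'(2) \<open>{u, z} \<in> edges G\<close> disj(2)]
  have "u \<notin> {z, y}"
    using u f by blast
  then have "u \<notin> \<Union>(insert {z, y} M')"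
    using uz(1) by simp
  moreover have "\<Union>(M - {{u, z}}) \<subseteq> \<Union>M" "z \<in> \<Union>M"
    using e by blast+
  then have "\<Union>(insert {z, y} M') \<subseteq> insert a (\<Union>M)"
    using M'(6) a by auto
  moreover have "M' \<union> N' \<subseteq> M \<union> N"
    using M'(3) by blast
  then have "insert {z, y} M' \<union> insert {u, z} N' \<subseteq> M \<union> N"
    using e f by simp
  moreover have "card (insert {z, y} M') + card (insert {u, z} N') = card M + card N"
    using insM(2) insN(2) M'(4) RM(2) RN(2) by simp
  ultimately show ?thesis
    using insM(1) insN(1) unfolding matching_exchange_def by blast
qed

lemma ex_matching_exchange:
  assumes G: "simple_graph G"
  shows "matching G M \<Longrightarrow> matching G N \<Longrightarrow> u \<in> \<Union>M \<Longrightarrow> u \<notin> \<Union>N \<Longrightarrow>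
    \<exists>M' N' a. matching_exchange G M N u M' N' a"
proof (induction "card M + card N" arbitrary: M N u rule: less_induct)
  case less
  obtain e where "e \<in> M" "u \<in> e"
    using less.prems(3) by blast
  then obtain z where e: "{u, z} \<in> M"
    using matching_edge_other_end[OF G less.prems(1)] by metis
  show ?case
  proof (cases "z \<in> \<Union>N")
    case False
    then show ?thesis
      using matching_exchange_single_edge[OF G less.prems(1,2) e less.prems(4)] by blast
  next
    case True
    then obtain f where "f \<in> N" "z \<in> f"
      by blast
    then obtain y where f: "{z, y} \<in> N"
      using matching_edge_other_end[OF G less.prems(2)] by metis
    note RM = matching_remove[OF G less.prems(1) e] and RN = matching_remove[OF G less.prems(2) f]
    have "\<exists>M' N' a. matching_exchange G (M - {{u, z}}) (N - {{z, y}}) y M' N' a \<and> (y \<in> \<Union>M \<or> a = y)"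
    proof (cases "y \<in> \<Union>(M - {{u, z}})")
      case True
      moreover have "y \<notin> \<Union>(N - {{z, y}})"
        using RN(3) by blast
      moreover have "card (M - {{u, z}}) + card (N - {{z, y}}) < card M + card N"
        using RM(2) RN(2) by simp
      ultimately show ?thesis
        using less.hyps RM(1) RN(1) by blast
    next
      case False
      then show ?thesis
        using matching_exchange_refl[OF RM(1) RN(1)] by blast
    qed
    then show ?thesis
      using matching_exchange_extend[OF G less.prems(1,2) e f less.prems(4)] by blast
  qed
qed

lemma MM_del_le: "simple_graph G \<Longrightarrow> MM (del G X) \<le> MM G"
  using ex_max_matching[OF simple_graph_del] card_le_MM matching_del
  unfolding max_matching_def by metis

lemma MM_del_lt_if_not_GE_O:
  assumes G: "simple_graph G" and u: "u \<in> verts G" "u \<notin> GE_O G"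
  shows "MM (del G {u}) < MM G"
proof -
  obtain M where M: "max_matching (del G {u}) M"
    using ex_max_matching[OF simple_graph_del[OF G]] by blast
  then have "matching G M" "u \<notin> \<Union>M"
    using matching_del matching_del_avoids unfolding max_matching_def by blast+
  moreover have "card M \<noteq> MM G"
    using \<open>matching G M\<close> \<open>u \<notin> \<Union>M\<close> u unfolding GE_O_def max_matching_def by blast
  ultimately show ?thesis
    using M card_le_MM[OF G] unfolding max_matching_def by fastforce
qed

lemma MM_del_neighbours_lt:
  assumes G: "simple_graph G" and u: "u \<in> GE_O G"
    and uv: "{u, v} \<in> edges G" and uw: "{u, w} \<in> edges G" and "v \<noteq> w"
  shows "MM (del G {v, w}) < MM G"
proof (rule ccontr)
  assume "\<not> MM (del G {v, w}) < MM G"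
  obtain N where N: "max_matching G N" "u \<notin> \<Union>N"
    using u unfolding GE_O_def by blast
  obtain M where M: "max_matching (del G {v, w}) M"
    using ex_max_matching[OF simple_graph_del[OF G]] by blast
  have "matching G M" "v \<notin> \<Union>M" "w \<notin> \<Union>M"
    using M matching_del matching_del_avoids unfolding max_matching_def by blast+
  have "card M = MM G"
    using M card_le_MM[OF G \<open>matching G M\<close>] \<open>\<not> MM (del G {v, w}) < MM G\<close>
    unfolding max_matching_def by linarith
  show False
  proof (cases "u \<in> \<Union>M")
    case False
    then show False
      using card_lt_MM_if_augmentable[OF G \<open>matching G M\<close> uv False \<open>v \<notin> \<Union>M\<close>] \<open>card M = MM G\<close>
      by simp
  next
    case True
    then obtain M' N' a where "matching_exchange G M N u M' N' a"
      using ex_matching_exchange[OF G \<open>matching G M\<close> _ True N(2)] N(1)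
      unfolding max_matching_def by blast
    then have M': "matching G M'" "matching G N'"
      "card M' + card N' = card M + card N" "u \<notin> \<Union>M'" "\<Union>M' \<subseteq> insert a (\<Union>M)"
      unfolding matching_exchange_def by blast+
    have "card M' \<ge> MM G"
      using M'(3) card_le_MM[OF G M'(2)] \<open>card M = MM G\<close> N(1)
      unfolding max_matching_def by linarith
    moreover have "v \<notin> \<Union>M' \<or> w \<notin> \<Union>M'"
      using M'(5) \<open>v \<notin> \<Union>M\<close> \<open>w \<notin> \<Union>M\<close> \<open>v \<noteq> w\<close> by blast
    ultimately show False
      using card_lt_MM_if_augmentable[OF G M'(1) uv M'(4)]
        card_lt_MM_if_augmentable[OF G M'(1) uw M'(4)] by linarith
  qed
qed

section \<open>Surplus and the vertex cover LP\<close>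

text \<open>
  \<open>has_surplus G s\<close> means \<open>surplus G \<ge> s\<close> but stays meaningful when \<open>G\<close> has no vertices, where
  \<open>surplus G\<close> is the junk value \<open>Min {}\<close>.
\<close>

definition has_surplus :: "'a graph \<Rightarrow> int \<Rightarrow> bool" where
  "has_surplus G s \<longleftrightarrow>
     (\<forall>Z. Z \<noteq> {} \<and> indep G Z \<longrightarrow> int (card Z) + s \<le> int (card (nbhd G Z)))"

lemma has_surplus_mono: "has_surplus G s \<Longrightarrow> t \<le> s \<Longrightarrow> has_surplus G t"
  unfolding has_surplus_def by (meson add_left_mono order_trans)

lemma has_surplus_if_surplus_ge:
  assumes G: "simple_graph G" and s: "s \<le> surplus G"
  shows "has_surplus G s"
  unfolding has_surplus_def
proof (intro allI impI)
  fix Z assume Z: "Z \<noteq> {} \<and> indep G Z"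
  have "{Z. Z \<noteq> {} \<and> indep G Z} \<subseteq> Pow (verts G)"
    unfolding indep_def by blast
  then have "finite {Z. Z \<noteq> {} \<and> indep G Z}"
    using G finite_subset unfolding simple_graph_def by blast
  then have "finite {int (card (nbhd G Z)) - int (card Z) | Z. Z \<noteq> {} \<and> indep G Z}"
    unfolding image_Collect[symmetric] by (rule finite_imageI)
  then have "surplus G \<le> int (card (nbhd G Z)) - int (card Z)"
    unfolding surplus_def by (rule Min_le) (use Z in blast)
  then show "int (card Z) + s \<le> int (card (nbhd G Z))"
    using s by linarith
qed

lemma has_surplus_del:
  assumes fin: "finite (verts G)" and "finite X" and s: "has_surplus G s"
  shows "has_surplus (del G X) (s - int (card X))"
  unfolding has_surplus_def
proof (intro allI impI)
  fix Z assume Z: "Z \<noteq> {} \<and> indep (del G X) Z"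
  then have "Z \<inter> X = {}" "indep G Z"
    unfolding indep_def by auto
  then have "int (card Z) + s \<le> int (card (nbhd G Z))"
    using s Z unfolding has_surplus_def by blast
  moreover have "nbhd G Z - X \<subseteq> nbhd (del G X) Z"
    using \<open>Z \<inter> X = {}\<close> unfolding nbhd_def by auto
  then have "card (nbhd G Z - X) \<le> card (nbhd (del G X) Z)"
    using fin by (intro card_mono) (auto simp: nbhd_def)
  moreover have "card (nbhd G Z) - card X \<le> card (nbhd G Z - X)"
    using \<open>finite X\<close> by (rule diff_card_le_card_Diff)
  ultimately show "int (card Z) + (s - int (card X)) \<le> int (card (nbhd (del G X) Z))"
    by linarith
qed

definition edge_sums_nonneg :: "'a graph \<Rightarrow> ('a \<Rightarrow> real) \<Rightarrow> bool" where
  "edge_sums_nonneg H d \<longleftrightarrow> (\<forall>a\<in>verts H. \<forall>b\<in>verts H. {a, b} \<in> edges H \<longrightarrow> 0 \<le> d a + d b)"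

lemma edge_sums_nonneg_neighbour_pos:
  assumes "edge_sums_nonneg H d" "a \<in> verts H" "b \<in> verts H" "{a, b} \<in> edges H" "d a < 0"
  shows "0 < d b"
proof -
  have "0 \<le> d a + d b"
    using assms(1-4) unfolding edge_sums_nonneg_def by blast
  then show ?thesis
    using assms(5) by linarith
qed

lemma card_negative_le_card_positive:
  assumes fin: "finite (verts H)" and Hall: "has_surplus H 0" and d: "edge_sums_nonneg H d"
  shows "card {v \<in> verts H. d v < 0} \<le> card {v \<in> verts H. 0 < d v}"
proof (cases "{v \<in> verts H. d v < 0} = {}")
  case True
  then show ?thesis
    by (simp only: card.empty le0)
next
  case False
  let ?L = "{v \<in> verts H. d v < 0}" and ?U = "{v \<in> verts H. 0 < d v}"
  have "indep H ?L"
    unfolding indep_def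
  proof (intro conjI ballI)
    fix a b assume "a \<in> ?L" "b \<in> ?L"
    then show "{a, b} \<notin> edges H"
      using edge_sums_nonneg_neighbour_pos[OF d, of a b] by auto
  qed blast
  then have "int (card ?L) + 0 \<le> int (card (nbhd H ?L))"
    using Hall[unfolded has_surplus_def, rule_format, of ?L] False by blast
  moreover have "nbhd H ?L \<subseteq> ?U"
  proof
    fix b assume "b \<in> nbhd H ?L"
    then obtain a where "a \<in> ?L" "b \<in> verts H" "{a, b} \<in> edges H"
      unfolding nbhd_def by blast
    then show "b \<in> ?U"
      using edge_sums_nonneg_neighbour_pos[OF d, of a b] by auto
  qed
  then have "card (nbhd H ?L) \<le> card ?U"
    using fin by (intro card_mono) simp_all
  ultimately show ?thesis
    by linarith
qed

definition shrink :: "real \<Rightarrow> ('a \<Rightarrow> real) \<Rightarrow> 'a \<Rightarrow> real" where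
  "shrink t d v = d v + (if d v < 0 then t else 0) - (if 0 < d v then t else 0)"

lemma edge_sums_nonneg_shrink:
  assumes d: "edge_sums_nonneg H d" and t: "\<And>v. v \<in> verts H \<Longrightarrow> d v \<noteq> 0 \<Longrightarrow> t \<le> \<bar>d v\<bar>"
  shows "edge_sums_nonneg H (shrink t d)"
  unfolding edge_sums_nonneg_def
proof (intro ballI impI)
  fix a b assume ab: "a \<in> verts H" "b \<in> verts H" "{a, b} \<in> edges H"
  have ba: "{b, a} \<in> edges H"
    using ab(3) by (simp add: insert_commute)
  have nonneg: "0 \<le> shrink t d v" if "v \<in> verts H" "0 \<le> d v" for v
    using that t[of v] unfolding shrink_def by auto
  consider "d a < 0" | "d b < 0" | "0 \<le> d a" "0 \<le> d b"
    by linarith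
  then show "0 \<le> shrink t d a + shrink t d b"
  proof cases
    case 1
    then have "0 < d b"
      using edge_sums_nonneg_neighbour_pos[OF d ab] by blast
    then show ?thesis
      using 1 d ab unfolding shrink_def edge_sums_nonneg_def by auto
  next
    case 2
    then have "0 < d a"
      using edge_sums_nonneg_neighbour_pos[OF d ab(2,1) ba] by blast
    then show ?thesis
      using 2 d ab unfolding shrink_def edge_sums_nonneg_def by auto
  next
    case 3
    then show ?thesis
      using nonneg ab by (simp add: add_nonneg_nonneg)
  qed
qed

lemma sum_shrink:
  assumes "finite V"
  shows "sum (shrink t d) V = sum d V + t * card {v \<in> V. d v < 0} - t * card {v \<in> V. 0 < d v}"
proof -
  have count: "(\<Sum>v\<in>V. if P v then t else 0) = t * card {v \<in> V. P v}" for P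
    using sum.inter_filter[OF assms, of "\<lambda>_. t" P] by (simp add: mult.commute)
  show ?thesis
    unfolding shrink_def sum_subtractf sum.distrib count by simp
qed

text \<open>
  Shrinking \<open>d\<close> by its least nonzero \<open>|d v|\<close> keeps the edge sums nonnegative, shrinks the
  support, and does not increase \<open>\<Sum> d\<close> because Hall's condition gives at most as many
  negative as positive values.
\<close>

lemma sum_nonneg_if_edge_sums_nonneg:
  fixes d :: "'a \<Rightarrow> real"
  assumes fin: "finite (verts H)" and Hall: "has_surplus H 0"
  shows "edge_sums_nonneg H d \<Longrightarrow> 0 \<le> sum d (verts H)"
proof (induction "card {v \<in> verts H. d v \<noteq> 0}" arbitrary: d rule: less_induct)
  case less
  define S where "S = {v \<in> verts H. d v \<noteq> 0}"
  define t where "t = Min ((\<lambda>v. \<bar>d v\<bar>) ` S)"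
  show ?case
  proof (cases "S = {}")
    case True
    then show ?thesis
      unfolding S_def by simp
  next
    case False
    moreover have "finite S"
      using fin unfolding S_def by simp
    ultimately obtain v0 where v0: "v0 \<in> S" "t = \<bar>d v0\<bar>"
      using Min_in[of "(\<lambda>v. \<bar>d v\<bar>) ` S"] unfolding t_def by blast
    have t_le: "t \<le> \<bar>d v\<bar>" if "v \<in> verts H" "d v \<noteq> 0" for v
      using \<open>finite S\<close> that unfolding t_def S_def by simp
    have "0 < t"
      using v0 unfolding S_def by auto
    have "{v \<in> verts H. shrink t d v \<noteq> 0} \<subset> S"
      using v0 unfolding S_def shrink_def by (auto simp: abs_if)
    then have "card {v \<in> verts H. shrink t d v \<noteq> 0} < card S"
      using \<open>finite S\<close> by (simp add: psubset_card_mono)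
    then have "0 \<le> sum (shrink t d) (verts H)"
      using less.hyps edge_sums_nonneg_shrink[OF less.prems] t_le unfolding S_def by simp
    moreover have "t * card {v \<in> verts H. d v < 0} \<le> t * card {v \<in> verts H. 0 < d v}"
      using card_negative_le_card_positive[OF fin Hall less.prems] \<open>0 < t\<close> by simp
    ultimately show ?thesis
      using sum_shrink[OF fin, of t d] by linarith
  qed
qed

definition lp_feasible :: "'a graph \<Rightarrow> ('a \<Rightarrow> real) \<Rightarrow> bool" where
  "lp_feasible G x \<longleftrightarrow>
     (\<forall>v\<in>verts G. 0 \<le> x v \<and> x v \<le> 1) \<and> (\<forall>u v. {u, v} \<in> edges G \<longrightarrow> x u + x v \<ge> 1)"

lemma LP_eq_Inf: "LP G = Inf ((\<lambda>x. sum x (verts G)) ` {x. lp_feasible G x})"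
  unfolding LP_def lp_feasible_def image_def by (rule arg_cong[where f = Inf]) blast

lemma LP_le_half_card: "LP G \<le> real (card (verts G)) / 2"
proof -
  have "lp_feasible G (\<lambda>_. 1 / 2)"
    unfolding lp_feasible_def by simp
  then have "(\<Sum>v\<in>verts G. 1 / 2) \<in> (\<lambda>x. sum x (verts G)) ` {x. lp_feasible G x}"
    by (intro image_eqI[where x = "\<lambda>_. 1 / 2"]) simp_all
  moreover have "bdd_below ((\<lambda>x. sum x (verts G)) ` {x. lp_feasible G x})"
    unfolding lp_feasible_def by (rule bdd_belowI[of _ 0]) (auto intro: sum_nonneg)
  ultimately have "LP G \<le> (\<Sum>v\<in>verts G. 1 / 2)"
    unfolding LP_eq_Inf by (rule cInf_lower)
  then show ?thesis
    by simp
qed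

lemma half_card_le_LP:
  assumes fin: "finite (verts H)" and Hall: "has_surplus H 0"
  shows "real (card (verts H)) / 2 \<le> LP H"
  unfolding LP_eq_Inf
proof (rule cInf_greatest)
  have "lp_feasible H (\<lambda>_. 1)"
    unfolding lp_feasible_def by simp
  then show "(\<lambda>x. sum x (verts H)) ` {x. lp_feasible H x} \<noteq> {}"
    by blast
next
  fix s assume "s \<in> (\<lambda>x. sum x (verts H)) ` {x. lp_feasible H x}"
  then obtain x where s: "s = sum x (verts H)" and x: "lp_feasible H x"
    by blast
  have "0 \<le> sum (\<lambda>v. x v - 1 / 2) (verts H)"
    using x by (intro sum_nonneg_if_edge_sums_nonneg[OF fin Hall])
      (auto simp: lp_feasible_def edge_sums_nonneg_def)
  then show "real (card (verts H)) / 2 \<le> s"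
    unfolding s by (simp add: sum_subtractf)
qed

section \<open>The parameter \<open>khat\<close> under vertex deletion\<close>

lemma khat_del_le:
  assumes G: "simple_graph G" and s: "has_surplus G (int (card X))" and X: "X \<subseteq> verts G"
    and MM: "MM (del G X) < MM G"
  shows "khat (del G X) (k - int (card X)) \<le> khat G k - 1"
proof -
  have fin: "finite (verts G)" "finite X"
    using G X finite_subset unfolding simple_graph_def by blast+
  have "has_surplus (del G X) 0"
    using has_surplus_del[OF fin s] by simp
  then have "real (card (verts G - X)) / 2 \<le> LP (del G X)"
    using half_card_le_LP[of "del G X"] fin by simp
  moreover have "card (verts G - X) = card (verts G) - card X" "card X \<le> card (verts G)"
    using fin X by (auto simp: card_Diff_subset card_mono)
  moreover have "LP G \<le> real (card (verts G)) / 2"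
    by (rule LP_le_half_card)
  moreover have "real (MM (del G X)) + 1 \<le> real (MM G)"
    using MM by linarith
  ultimately show ?thesis
    unfolding khat_def by simp
qed

lemma branch_output_del:
  assumes G: "simple_graph G" and "branch_output G k Gi ki"
  shows "\<exists>X. X \<subseteq> verts G \<and> card X \<le> 2 \<and> Gi = del G X \<and> ki = k - int (card X) \<and>
    MM (del G X) < MM G"
  using assms(2)
proof cases
  case (rule1 u v)
  then obtain t where t: "t \<in> verts G" "t \<notin> GE_O G" "Gi = del G {t}"
    unfolding GE_I_def GE_P_def nbhd_def by blast
  then show ?thesis
    using MM_del_lt_if_not_GE_O[OF G t(1,2)] rule1 by (intro exI[of _ "{t}"]) simp
next
  case (rule2 u v w G' x y)
  have O: "GE_O G \<subseteq> verts G"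
    unfolding GE_O_def by blast
  consider "Gi = del G {v, w}" | z where "z \<in> GE_P G'" "Gi = del G' {z}"
    using rule2 by blast
  then show ?thesis
  proof cases
    case 1
    then show ?thesis
      using MM_del_neighbours_lt[OF G] rule2 O by (intro exI[of _ "{v, w}"]) auto
  next
    case (2 z)
    then have z: "z \<in> verts G" "z \<noteq> u" "z \<notin> GE_O G'"
      using rule2 unfolding GE_P_def by auto
    have "MM (del G' {z}) < MM G"
      using MM_del_lt_if_not_GE_O[OF _ _ z(3)] MM_del_le[OF G] simple_graph_del[OF G] z rule2
      by (metis DiffI order.strict_trans2 singletonD verts_del)
    moreover have "del G' {z} = del G {u, z}"
      using rule2 del_del by (metis insert_is_Un)
    ultimately show ?thesis
      using 2 z rule2 O by (intro exI[of _ "{u, z}"]) auto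
  qed
qed

theorem lemma13:
  fixes G Gi :: "'a graph" and k ki :: int
  assumes "simple_graph G"
    and "surplus G \<ge> 2"
    and "branch_output G k Gi ki"
  shows "khat Gi ki \<le> khat G k - 1"
proof -
  obtain X where X: "X \<subseteq> verts G" "card X \<le> 2" "Gi = del G X" "ki = k - int (card X)"
    "MM (del G X) < MM G"
    using branch_output_del[OF assms(1,3)] by blast
  have "has_surplus G (int (card X))"
    using has_surplus_mono[OF has_surplus_if_surplus_ge[OF assms(1,2)]] X(2) by simp
  from khat_del_le[OF assms(1) this X(1,5)] show ?thesis
    using X(3,4) by simp
qed

end
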